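(* Let $(P,<)$ be a finite graded poset with rank function $\rho$, and let $w:P\to\mathbb{R}$ be a weight function. Let $G$ be the graph with vertex set $P$ having an edge between $x$ and $y$ if and only if $x\lessdot y$ or $y\lessdot x$; an edge $\{x,y\}$ with $x\lessdot y$ is given weight $w(y)$. Then the maximum score attainable by a legal move sequence in the generalized taxman game on $(P,<,w)$ equals the maximum weight of a matching of $G$ that contains no flat alternating cycle. More precisely, legal move sequences correspond to flat-alternating-cycle-free matchings of $G$ in such a way that the score of the move sequence equals the weight of the matching: from a legal move sequence $p_1,\dots,p_n$ one obtains such a matching $\{(q_i,p_i)\}$ with $q_i\lessdot p_i$, where $q_i$ is a maximal element among those removed by the taxman in move $i$; and conversely, for every flat-alternating-cycle-free matching $\{(x_i,y_i)\}$ with $x_i\lessdot y_i$, the elements $y_i$ can be ordered so as to form a legal move sequence whose score is $\sum_i w(y_i)$.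
   Context: A strict partial order $(P,<)$ is irreflexive, transitive and asymmetric. For $p,q\in P$, $p$ covers $q$, written $q\lessdot p$, if $q<p$ and there is no $x\in P$ with $q<x<p$. A graded poset is a poset $(P,<)$ with a rank function $\rho:P\to\mathbb{N}$ such that $q<p$ implies $\rho(q)<\rho(p)$ and $q\lessdot p$ implies $\rho(p)=\rho(q)+1$. The generalized taxman game on $(P,<,w)$, with $P$ finite and $w:P\to\mathbb{R}$: initially all elements of $P$ are in play. A move consists of picking an element $p$ still in play such that some $q<p$ is still in play (a legal pick); the player gains $w(p)$ points, $p$ is removed, and the taxman removes all elements $a<p$ still in play. A legal move sequence is a finite sequence of legal picks made in succession; its score is the sum of the weights of the picked elements. When no legal picks remain, the taxman claims all remaining elements. For a graph $G$ whose vertex set is a graded poset, a matching is a set of edges no two sharing an endpoint. A cycle is alternating (with respect to a matching) if exactly every other edge of the cycle lies in the matching. A cycle is flat if there is an integer $n$ such that all its vertices have rank $n$ or $n+1$. *)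

theory Defs
  imports Complex_Main
begin

definition strict_po :: "'a set \<Rightarrow> ('a \<Rightarrow> 'a \<Rightarrow> bool) \<Rightarrow> bool" where
  "strict_po P lt \<longleftrightarrow>
     (\<forall>x\<in>P. \<not> lt x x) \<and>
     (\<forall>x\<in>P. \<forall>y\<in>P. \<forall>z\<in>P. lt x y \<longrightarrow> lt y z \<longrightarrow> lt x z) \<and>
     (\<forall>x\<in>P. \<forall>y\<in>P. lt x y \<longrightarrow> \<not> lt y x)"

definition covers :: "'a set \<Rightarrow> ('a \<Rightarrow> 'a \<Rightarrow> bool) \<Rightarrow> 'a \<Rightarrow> 'a \<Rightarrow> bool" where
  "covers P lt q p \<longleftrightarrow> q \<in> P \<and> p \<in> P \<and> lt q p \<and> \<not> (\<exists>x\<in>P. lt q x \<and> lt x p)"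

definition graded :: "'a set \<Rightarrow> ('a \<Rightarrow> 'a \<Rightarrow> bool) \<Rightarrow> ('a \<Rightarrow> nat) \<Rightarrow> bool" where
  "graded P lt \<rho> \<longleftrightarrow>
     (\<forall>p\<in>P. \<forall>q\<in>P. lt q p \<longrightarrow> \<rho> q < \<rho> p) \<and>
     (\<forall>p q. covers P lt q p \<longrightarrow> \<rho> p = \<rho> q + 1)"

text \<open>S is the set of elements still in play.\<close>
definition legal_pick :: "('a \<Rightarrow> 'a \<Rightarrow> bool) \<Rightarrow> 'a set \<Rightarrow> 'a \<Rightarrow> bool" where
  "legal_pick lt S p \<longleftrightarrow> p \<in> S \<and> (\<exists>q\<in>S. lt q p)"

definition do_move :: "('a \<Rightarrow> 'a \<Rightarrow> bool) \<Rightarrow> 'a set \<Rightarrow> 'a \<Rightarrow> 'a set" where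
  "do_move lt S p = S - {p} - {a \<in> S. lt a p}"

fun legal_seq :: "('a \<Rightarrow> 'a \<Rightarrow> bool) \<Rightarrow> 'a set \<Rightarrow> 'a list \<Rightarrow> bool" where
  "legal_seq lt S [] = True"
| "legal_seq lt S (p # ps) = (legal_pick lt S p \<and> legal_seq lt (do_move lt S p) ps)"

definition legal_move_seq :: "'a set \<Rightarrow> ('a \<Rightarrow> 'a \<Rightarrow> bool) \<Rightarrow> 'a list \<Rightarrow> bool" where
  "legal_move_seq P lt ps \<longleftrightarrow> legal_seq lt P ps"

definition score :: "('a \<Rightarrow> real) \<Rightarrow> 'a list \<Rightarrow> real" where
  "score w ps = sum_list (map w ps)"

text \<open>Elements in play just before move i (0-based).\<close>
definition state_before :: "'a set \<Rightarrow> ('a \<Rightarrow> 'a \<Rightarrow> bool) \<Rightarrow> 'a list \<Rightarrow> nat \<Rightarrow> 'a set" where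
  "state_before P lt ps i = foldl (do_move lt) P (take i ps)"

definition taxed :: "'a set \<Rightarrow> ('a \<Rightarrow> 'a \<Rightarrow> bool) \<Rightarrow> 'a list \<Rightarrow> nat \<Rightarrow> 'a set" where
  "taxed P lt ps i = {a \<in> state_before P lt ps i. lt a (ps ! i)}"

text \<open>The edge {x,y} of G with x \<lessdot> y is represented by the oriented pair (x,y).\<close>
definition hasse_edge :: "'a set \<Rightarrow> ('a \<Rightarrow> 'a \<Rightarrow> bool) \<Rightarrow> 'a \<Rightarrow> 'a \<Rightarrow> bool" where
  "hasse_edge P lt x y \<longleftrightarrow> covers P lt x y \<or> covers P lt y x"

definition hasse_matching :: "'a set \<Rightarrow> ('a \<Rightarrow> 'a \<Rightarrow> bool) \<Rightarrow> ('a \<times> 'a) set \<Rightarrow> bool" where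
  "hasse_matching P lt M \<longleftrightarrow>
     M \<subseteq> {(x, y). covers P lt x y} \<and>
     (\<forall>e\<in>M. \<forall>e'\<in>M. e \<noteq> e' \<longrightarrow> {fst e, snd e} \<inter> {fst e', snd e'} = {})"

definition in_matching :: "('a \<times> 'a) set \<Rightarrow> 'a \<Rightarrow> 'a \<Rightarrow> bool" where
  "in_matching M x y \<longleftrightarrow> (x, y) \<in> M \<or> (y, x) \<in> M"

definition flat_alt_cycle :: "'a set \<Rightarrow> ('a \<Rightarrow> 'a \<Rightarrow> bool) \<Rightarrow> ('a \<Rightarrow> nat) \<Rightarrow> ('a \<times> 'a) set \<Rightarrow> 'a list \<Rightarrow> bool" where
  "flat_alt_cycle P lt \<rho> M vs \<longleftrightarrow>
     (let k = length vs in
        k \<ge> 3 \<and> even k \<and> distinct vs \<and> set vs \<subseteq> P \<and>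
        (\<forall>i<k. hasse_edge P lt (vs ! i) (vs ! ((i + 1) mod k)) \<and>
               (in_matching M (vs ! i) (vs ! ((i + 1) mod k)) \<longleftrightarrow> even i)) \<and>
        (\<exists>n. \<forall>i<k. \<rho> (vs ! i) = n \<or> \<rho> (vs ! i) = n + 1))"

definition facf_matching :: "'a set \<Rightarrow> ('a \<Rightarrow> 'a \<Rightarrow> bool) \<Rightarrow> ('a \<Rightarrow> nat) \<Rightarrow> ('a \<times> 'a) set \<Rightarrow> bool" where
  "facf_matching P lt \<rho> M \<longleftrightarrow>
     hasse_matching P lt M \<and> \<not> (\<exists>vs. flat_alt_cycle P lt \<rho> M vs)"

definition matching_weight :: "('a \<Rightarrow> real) \<Rightarrow> ('a \<times> 'a) set \<Rightarrow> real" where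
  "matching_weight w M = (\<Sum>(x, y)\<in>M. w y)"

end

theory Submission
  imports Defs
begin

text \<open>
  Pairing each pick of a legal move sequence with a maximal element taxed in that move gives a
  cover, because the elements still in play always form an up-set; the pairs are disjoint, since
  both elements leave play. A flat alternating cycle through these pairs is impossible: at the
  earliest move whose pair lies on the cycle, the pick has the upper of the two ranks, so its
  unmatched cycle neighbour lies below it and is still in play, hence taxed in that move, although
  it belongs to a later pair.

  Conversely, the tops of a matching without flat alternating cycles can be picked one at a time,
  always choosing a top that no remaining bottom lies below. Such a top exists: otherwise, in the
  lowest rank layer every top covers the bottom of another top, and following these covers around
  a cycle produces a flat alternating cycle. Both constructions preserve weights, so the sets of
  attainable scores and matching weights coincide.
\<close>

lemma foldl_do_move_subset: "foldl (do_move lt) S ps \<subseteq> S"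
  by (induction ps arbitrary: S) (fastforce simp: do_move_def)+

lemma state_before_subset: "state_before P lt ps i \<subseteq> P"
  unfolding state_before_def by (rule foldl_do_move_subset)

lemma state_before_Suc:
  "i < length ps \<Longrightarrow> state_before P lt ps (Suc i) = do_move lt (state_before P lt ps i) (ps ! i)"
  by (simp add: state_before_def take_Suc_conv_app_nth)

lemma state_before_antimono:
  assumes "i \<le> j"
  shows "state_before P lt ps j \<subseteq> state_before P lt ps i"
proof -
  have "take j ps = take i ps @ take (j - i) (drop i ps)"
    using take_add[of i "j - i" ps] assms by simp
  then show ?thesis
    unfolding state_before_def by (simp add: foldl_do_move_subset)
qed

lemma legal_seq_conv_nth:
  "legal_seq lt S ps \<longleftrightarrow> (\<forall>i<length ps. legal_pick lt (foldl (do_move lt) S (take i ps)) (ps ! i))"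
  by (induction ps arbitrary: S) (simp_all add: All_less_Suc2)

lemma legal_move_seq_nth:
  "legal_move_seq P lt ps \<Longrightarrow> i < length ps \<Longrightarrow> legal_pick lt (state_before P lt ps i) (ps ! i)"
  unfolding legal_move_seq_def state_before_def legal_seq_conv_nth by blast

lemma hasse_edge_commute: "hasse_edge P lt x y \<longleftrightarrow> hasse_edge P lt y x"
  unfolding hasse_edge_def by blast

lemma in_matching_commute: "in_matching M x y \<longleftrightarrow> in_matching M y x"
  unfolding in_matching_def by blast

lemma flat_alt_cycle_neighbours:
  assumes cyc: "flat_alt_cycle P lt \<rho> M vs" and v: "v \<in> set vs"
  obtains u b where "u \<in> set vs" "in_matching M v u"
    and "b \<in> set vs" "hasse_edge P lt v b" "\<not> in_matching M v b"
proof -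
  define k where "k = length vs"
  have k: "k \<ge> 3" "even k"
    and edge: "\<And>i. i < k \<Longrightarrow> hasse_edge P lt (vs ! i) (vs ! ((i + 1) mod k)) \<and>
                 (in_matching M (vs ! i) (vs ! ((i + 1) mod k)) \<longleftrightarrow> even i)"
    using cyc unfolding flat_alt_cycle_def Let_def k_def by auto
  obtain i where i: "i < k" "v = vs ! i"
    using v unfolding k_def by (auto simp: in_set_conv_nth)
  define j where "j = (i + k - 1) mod k"
  have j: "j < k" "(j + 1) mod k = i" "even j \<longleftrightarrow> odd i"
  proof -
    show "j < k" using k unfolding j_def by simp
    show "(j + 1) mod k = i"
      using i(1) k(1) unfolding j_def by (simp add: mod_Suc_eq)
    show "even j \<longleftrightarrow> odd i"
      using i(1) k unfolding j_def by (cases "i = 0") (auto simp: mod_if)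
  qed
  have in_set: "vs ! ((i + 1) mod k) \<in> set vs" "vs ! j \<in> set vs"
    using k j(1) unfolding k_def by auto
  have succ: "hasse_edge P lt v (vs ! ((i + 1) mod k))"
    "in_matching M v (vs ! ((i + 1) mod k)) \<longleftrightarrow> even i"
    using edge[OF i(1)] i(2) by auto
  have pred: "hasse_edge P lt v (vs ! j)" "in_matching M v (vs ! j) \<longleftrightarrow> odd i"
    using edge[OF j(1)] j(2,3) i(2) by (auto simp: hasse_edge_commute in_matching_commute)
  show thesis
    using that[OF in_set(1) _ in_set(2)] that[OF in_set(2) _ in_set(1)] succ pred
    by (cases "even i") auto
qed

lemma funpow_in_closed: "z \<in> Z \<Longrightarrow> f ` Z \<subseteq> Z \<Longrightarrow> (f ^^ k) z \<in> Z"
  by (induction k) auto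

lemma funpow_periodic_point:
  assumes "finite Z" "z \<in> Z" "f ` Z \<subseteq> Z"
  obtains y d where "y \<in> Z" "0 < d" "(f ^^ d) y = y"
proof -
  have orbit: "(f ^^ i) z \<in> Z" for i
    using assms(2,3) by (rule funpow_in_closed)
  have "\<not> inj_on (\<lambda>i. (f ^^ i) z) {..card Z}"
    using card_inj_on_le[OF _ _ assms(1), of "\<lambda>i. (f ^^ i) z" "{..card Z}"] orbit by auto
  then obtain i j where ij: "i < j" "(f ^^ i) z = (f ^^ j) z"
    unfolding inj_on_def by (metis linorder_neqE_nat)
  have "(f ^^ (j - i)) ((f ^^ i) z) = (f ^^ (j - i + i)) z"
    by (simp add: funpow_add)
  also have "\<dots> = (f ^^ i) z" using ij by simp
  finally have "(f ^^ (j - i)) ((f ^^ i) z) = (f ^^ i) z" .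
  with \<open>i < j\<close> orbit show thesis by (intro that) auto
qed

lemma funpow_inj_on_period:
  assumes period: "(f ^^ L) y = y"
    and minimal: "\<And>d. 0 < d \<Longrightarrow> d < L \<Longrightarrow> (f ^^ d) y \<noteq> y"
  shows "inj_on (\<lambda>k. (f ^^ k) y) {0..<L}"
proof (rule linorder_inj_onI')
  fix a b assume ab: "a \<in> {0..<L}" "b \<in> {0..<L}" "a < b"
  show "(f ^^ a) y \<noteq> (f ^^ b) y"
  proof
    assume eq: "(f ^^ a) y = (f ^^ b) y"
    have exps: "b - a + L = (L - a) + b" "(L - a) + a = L" using ab by auto
    have "(f ^^ (b - a)) y = (f ^^ (b - a + L)) y" using period by (simp add: funpow_add)
    also have "\<dots> = (f ^^ (L - a)) ((f ^^ b) y)" by (simp only: exps funpow_add comp_apply)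
    also have "\<dots> = (f ^^ ((L - a) + a)) y" by (simp only: eq funpow_add comp_apply)
    also have "\<dots> = y" using period by (simp only: exps)
    finally have "(f ^^ (b - a)) y = y" .
    moreover have "0 < b - a" "b - a < L" using ab by auto
    ultimately show False using minimal by blast
  qed
qed

lemma finite_fun_cycle:
  assumes "finite Z" "Z \<noteq> {}" "f ` Z \<subseteq> Z"
  obtains zs where "zs \<noteq> []" "distinct zs" "set zs \<subseteq> Z"
    and "\<forall>i<length zs. f (zs ! i) = zs ! (Suc i mod length zs)"
proof -
  obtain y d where y: "y \<in> Z" "0 < d" "(f ^^ d) y = y"
    using funpow_periodic_point assms by (metis ex_in_conv)
  define L where "L = (LEAST d. 0 < d \<and> (f ^^ d) y = y)"
  have L: "0 < L" "(f ^^ L) y = y"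
    using LeastI[of "\<lambda>d. 0 < d \<and> (f ^^ d) y = y"] y unfolding L_def by blast+
  have L_min: "(f ^^ d) y \<noteq> y" if "0 < d" "d < L" for d
    using not_less_Least[of d "\<lambda>d. 0 < d \<and> (f ^^ d) y = y"] that unfolding L_def by blast
  define zs where "zs = map (\<lambda>k. (f ^^ k) y) [0..<L]"
  have "distinct zs"
    unfolding zs_def using funpow_inj_on_period[OF L(2) L_min] by (simp add: distinct_map)
  moreover have "set zs \<subseteq> Z"
    unfolding zs_def using funpow_in_closed[OF y(1) assms(3)] by auto
  moreover have "f (zs ! i) = zs ! (Suc i mod length zs)" if "i < length zs" for i
  proof -
    have "f (zs ! i) = (f ^^ Suc i) y" using that by (simp add: zs_def)
    also have "\<dots> = (f ^^ (Suc i mod L)) y"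
      using that L by (cases "Suc i = L") (auto simp: zs_def)
    finally show ?thesis using that by (simp add: zs_def)
  qed
  ultimately show thesis using L(1) by (intro that) (auto simp: zs_def)
qed

locale graded_poset =
  fixes P :: "'a set" and lt :: "'a \<Rightarrow> 'a \<Rightarrow> bool" and \<rho> :: "'a \<Rightarrow> nat"
  assumes strict_po: "strict_po P lt" and graded: "graded P lt \<rho>"
begin

lemma less_irrefl: "x \<in> P \<Longrightarrow> \<not> lt x x"
  using strict_po unfolding strict_po_def by blast

lemma less_trans: "x \<in> P \<Longrightarrow> y \<in> P \<Longrightarrow> z \<in> P \<Longrightarrow> lt x y \<Longrightarrow> lt y z \<Longrightarrow> lt x z"
  using strict_po unfolding strict_po_def by blast

lemma rank_less: "q \<in> P \<Longrightarrow> p \<in> P \<Longrightarrow> lt q p \<Longrightarrow> \<rho> q < \<rho> p"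
  using graded unfolding graded_def by blast

lemma rank_covers: "covers P lt q p \<Longrightarrow> \<rho> p = \<rho> q + 1"
  using graded unfolding graded_def by blast

lemma covers_if_rank_Suc:
  assumes "q \<in> P" "p \<in> P" "lt q p" "\<rho> p = \<rho> q + 1"
  shows "covers P lt q p"
proof -
  have "\<not> (lt q x \<and> lt x p)" if "x \<in> P" for x
    using rank_less[OF assms(1) that] rank_less[OF that assms(2)] assms(4) by auto
  with assms show ?thesis unfolding covers_def by blast
qed

lemma exists_maximal:
  assumes "finite A" "A \<noteq> {}" "A \<subseteq> P"
  obtains m where "m \<in> A" "\<forall>a\<in>A. \<not> lt m a"
proof -
  have "Max (\<rho> ` A) \<in> \<rho> ` A" using assms(1,2) by simp
  then obtain m where m: "m \<in> A" "\<rho> m = Max (\<rho> ` A)" by auto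
  have "\<not> lt m a" if "a \<in> A" for a
  proof
    assume "lt m a"
    then have "\<rho> m < \<rho> a" using rank_less m that assms(3) by blast
    moreover have "\<rho> a \<le> \<rho> m" using m(2) that assms(1) by simp
    ultimately show False by simp
  qed
  with m show thesis by (intro that) auto
qed

definition up_closed :: "'a set \<Rightarrow> bool" where
  "up_closed S \<longleftrightarrow> (\<forall>q\<in>S. \<forall>x\<in>P. lt q x \<longrightarrow> x \<in> S)"

lemma up_closed_do_move:
  assumes "up_closed S" "S \<subseteq> P" "p \<in> P"
  shows "up_closed (do_move lt S p)"
  unfolding up_closed_def do_move_def
proof (intro ballI impI)
  fix q x assume q: "q \<in> S - {p} - {a \<in> S. lt a p}" and x: "x \<in> P" "lt q x"
  then have "x \<in> S" using assms(1) unfolding up_closed_def by blast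
  moreover have "\<not> lt x p" using q x less_trans[of q x p] assms(2,3) by blast
  ultimately show "x \<in> S - {p} - {a \<in> S. lt a p}" using q x by auto
qed

lemma up_closed_state_before:
  assumes "legal_move_seq P lt ps" "i \<le> length ps"
  shows "up_closed (state_before P lt ps i)"
  using assms(2)
proof (induction i)
  case 0
  then show ?case by (simp add: state_before_def up_closed_def)
next
  case (Suc i)
  then have "i < length ps" by simp
  then have "ps ! i \<in> P"
    using legal_move_seq_nth[OF assms(1)] state_before_subset[of P lt ps i]
    unfolding legal_pick_def by blast
  with Suc \<open>i < length ps\<close> show ?case
    by (simp add: state_before_Suc up_closed_do_move state_before_subset)
qed

context
  fixes ps qs :: "'a list"
  assumes legal: "legal_move_seq P lt ps"
    and length_eq: "length qs = length ps"
    and maximal_taxed: "\<forall>i<length ps. qs ! i \<in> taxed P lt ps i \<and>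
                          (\<forall>a\<in>taxed P lt ps i. \<not> lt (qs ! i) a)"
begin

lemma pick_in_state: "i < length ps \<Longrightarrow> ps ! i \<in> state_before P lt ps i"
  using legal_move_seq_nth[OF legal] unfolding legal_pick_def by blast

lemma taxed_in_state: "i < length ps \<Longrightarrow> qs ! i \<in> state_before P lt ps i \<and> lt (qs ! i) (ps ! i)"
  using maximal_taxed unfolding taxed_def by blast

lemma move_removes_pair:
  "i < length ps \<Longrightarrow> ps ! i \<notin> state_before P lt ps (Suc i) \<and> qs ! i \<notin> state_before P lt ps (Suc i)"
  using taxed_in_state by (simp add: state_before_Suc do_move_def)

lemma later_moves_disjoint:
  assumes "i < j" "j < length ps"
  shows "{ps ! j, qs ! j} \<inter> {ps ! i, qs ! i} = {}"
proof -
  have "state_before P lt ps j \<subseteq> state_before P lt ps (Suc i)"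
    using state_before_antimono[of "Suc i" j] assms(1) by simp
  then show ?thesis
    using pick_in_state[OF assms(2)] taxed_in_state[OF assms(2)] move_removes_pair[of i] assms
    by auto
qed

lemma maximal_taxed_covers:
  assumes i: "i < length ps"
  shows "covers P lt (qs ! i) (ps ! i)"
proof -
  have "\<not> (lt (qs ! i) x \<and> lt x (ps ! i))" if "x \<in> P" for x
  proof
    assume between: "lt (qs ! i) x \<and> lt x (ps ! i)"
    have "up_closed (state_before P lt ps i)"
      using up_closed_state_before[OF legal] i by simp
    then have "x \<in> state_before P lt ps i"
      using taxed_in_state[OF i] that between unfolding up_closed_def by blast
    then have "x \<in> taxed P lt ps i" using between unfolding taxed_def by simp
    then show False using maximal_taxed i between by blast
  qed
  then show ?thesis
    using taxed_in_state[OF i] pick_in_state[OF i] state_before_subset[of P lt ps i]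
    unfolding covers_def by blast
qed

lemma distinct_picks: "distinct ps"
  unfolding distinct_conv_nth
proof (intro allI impI)
  fix i j assume "i < length ps" "j < length ps" "i \<noteq> j"
  then show "ps ! i \<noteq> ps ! j"
    using later_moves_disjoint[of i j] later_moves_disjoint[of j i] by (cases "i < j") auto
qed

lemma mem_zip_iff: "e \<in> set (zip qs ps) \<longleftrightarrow> (\<exists>i<length ps. e = (qs ! i, ps ! i))"
  by (auto simp: set_zip length_eq)

lemma hasse_matching_zip: "hasse_matching P lt (set (zip qs ps))"
  unfolding hasse_matching_def
proof (intro conjI ballI impI)
  show "set (zip qs ps) \<subseteq> {(x, y). covers P lt x y}"
    using maximal_taxed_covers by (auto simp: mem_zip_iff)
next
  fix e e' assume "e \<in> set (zip qs ps)" "e' \<in> set (zip qs ps)" "e \<noteq> e'"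
  then obtain i j where "i < length ps" "j < length ps" "i \<noteq> j"
    and "e = (qs ! i, ps ! i)" "e' = (qs ! j, ps ! j)"
    unfolding mem_zip_iff by blast
  then show "{fst e, snd e} \<inter> {fst e', snd e'} = {}"
    using later_moves_disjoint[of i j] later_moves_disjoint[of j i]
    by (cases "i < j") (auto simp: insert_commute)
qed

lemma matching_weight_zip: "matching_weight w (set (zip qs ps)) = score w ps"
proof -
  have "map (\<lambda>(x, y). w y) (zip qs ps) = map w ps"
    by (rule nth_equalityI) (auto simp: length_eq)
  moreover have "distinct (zip qs ps)" using distinct_picks by (rule distinct_zipI2)
  ultimately show ?thesis
    using sum.distinct_set_conv_list[of "zip qs ps" "\<lambda>(x, y). w y"]
    unfolding matching_weight_def score_def by simp
qed

lemma cycle_vertex_in_pair: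
  assumes cyc: "flat_alt_cycle P lt \<rho> (set (zip qs ps)) vs" and v: "v \<in> set vs"
  obtains m where "m < length ps" "ps ! m \<in> set vs" "qs ! m \<in> set vs" "v \<in> {qs ! m, ps ! m}"
proof -
  obtain u where "u \<in> set vs" "in_matching (set (zip qs ps)) v u"
    using flat_alt_cycle_neighbours[OF cyc v] by blast
  then obtain m where "m < length ps" "{v, u} = {qs ! m, ps ! m}"
    unfolding in_matching_def mem_zip_iff by blast
  with v \<open>u \<in> set vs\<close> show thesis by (intro that) (auto simp: doubleton_eq_iff)
qed

lemma no_flat_alt_cycle_zip: "\<not> flat_alt_cycle P lt \<rho> (set (zip qs ps)) vs"
proof
  let ?M = "set (zip qs ps)"
  let ?S = "state_before P lt ps"
  assume cyc: "flat_alt_cycle P lt \<rho> ?M vs"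
  then have vs: "length vs \<ge> 3" "set vs \<subseteq> P"
    unfolding flat_alt_cycle_def Let_def by auto
  obtain n where flat: "\<And>v. v \<in> set vs \<Longrightarrow> \<rho> v = n \<or> \<rho> v = n + 1"
    using cyc unfolding flat_alt_cycle_def Let_def in_set_conv_nth by blast
  define I where "I = {m. m < length ps \<and> ps ! m \<in> set vs \<and> qs ! m \<in> set vs}"
  have move_of_vertex: "\<exists>m\<in>I. v \<in> {qs ! m, ps ! m}" if "v \<in> set vs" for v
    using cycle_vertex_in_pair[OF cyc that] unfolding I_def by blast
  have "vs ! 0 \<in> set vs" using vs(1) by (intro nth_mem) linarith
  then have "I \<noteq> {}" using move_of_vertex by blast
  moreover have "finite I" unfolding I_def by simp
  ultimately obtain m where m: "m \<in> I" "\<And>m'. m' \<in> I \<Longrightarrow> m \<le> m'"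
    using Min_in Min_le by blast
  then have m_bounds: "m < length ps" "ps ! m \<in> set vs" "qs ! m \<in> set vs"
    unfolding I_def by auto
  have rank_top: "\<rho> (ps ! m) = n + 1"
    using rank_covers[OF maximal_taxed_covers[OF m_bounds(1)]] flat[OF m_bounds(2)]
      flat[OF m_bounds(3)] by auto
  obtain b where b: "b \<in> set vs" "hasse_edge P lt (ps ! m) b" "\<not> in_matching ?M (ps ! m) b"
    using flat_alt_cycle_neighbours[OF cyc m_bounds(2)] by blast
  have "\<not> covers P lt (ps ! m) b"
    using rank_covers[of "ps ! m" b] rank_top flat[OF b(1)] by auto
  then have b_below: "lt b (ps ! m)"
    using b(2) unfolding hasse_edge_def covers_def by blast
  obtain m' where m': "m' \<in> I" "b \<in> {qs ! m', ps ! m'}"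
    using move_of_vertex[OF b(1)] by blast
  have "b \<noteq> ps ! m" using b_below less_irrefl b(1) vs(2) by blast
  moreover have "b \<noteq> qs ! m"
    using b(3) m_bounds(1) unfolding in_matching_def mem_zip_iff by blast
  ultimately have "m < m'" using m(2)[OF m'(1)] m' by (cases "m = m'") auto
  moreover have "b \<in> ?S m'"
    using m' pick_in_state taxed_in_state unfolding I_def by auto
  ultimately have "b \<in> ?S (Suc m)"
    using state_before_antimono[of "Suc m" m' P lt ps] by auto
  moreover have "b \<in> ?S m"
    using calculation state_before_antimono[of m "Suc m" P lt ps] by auto
  ultimately show False
    using b_below state_before_Suc[OF m_bounds(1)] unfolding do_move_def by auto
qed

lemma game_to_matching:
  "(\<forall>i<length ps. covers P lt (qs ! i) (ps ! i)) \<and>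
   facf_matching P lt \<rho> (set (zip qs ps)) \<and>
   matching_weight w (set (zip qs ps)) = score w ps"
  using maximal_taxed_covers hasse_matching_zip no_flat_alt_cycle_zip matching_weight_zip
  unfolding facf_matching_def by blast

end

lemma taxed_maximal_choice:
  assumes "finite P" "legal_move_seq P lt ps"
  obtains qs where "length qs = length ps"
    and "\<forall>i<length ps. qs ! i \<in> taxed P lt ps i \<and> (\<forall>a\<in>taxed P lt ps i. \<not> lt (qs ! i) a)"
proof -
  have "\<exists>q. q \<in> taxed P lt ps i \<and> (\<forall>a\<in>taxed P lt ps i. \<not> lt q a)" if i: "i < length ps" for i
  proof -
    have sub: "taxed P lt ps i \<subseteq> P"
      using state_before_subset[of P lt ps i] unfolding taxed_def by blast
    have "taxed P lt ps i \<noteq> {}"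
      using legal_move_seq_nth[OF assms(2) i] unfolding legal_pick_def taxed_def by blast
    then show ?thesis using exists_maximal[OF finite_subset[OF sub assms(1)] _ sub] by metis
  qed
  then obtain q where "\<forall>i<length ps. q i \<in> taxed P lt ps i \<and> (\<forall>a\<in>taxed P lt ps i. \<not> lt (q i) a)"
    by metis
  then show thesis by (intro that[of "map q [0..<length ps]"]) auto
qed

end

locale graded_poset_matching = graded_poset +
  fixes M :: "('a \<times> 'a) set"
  assumes finite_P: "finite P" and facf: "facf_matching P lt \<rho> M"
begin

lemma matching_covers: "(x, y) \<in> M \<Longrightarrow> covers P lt x y"
  using facf unfolding facf_matching_def hasse_matching_def by blast

lemma matching_disjoint:
  "e \<in> M \<Longrightarrow> e' \<in> M \<Longrightarrow> e \<noteq> e' \<Longrightarrow> {fst e, snd e} \<inter> {fst e', snd e'} = {}"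
  using facf unfolding facf_matching_def hasse_matching_def by blast

lemma bottom_ne_top:
  assumes "(x, y) \<in> M" "(x', y') \<in> M"
  shows "x \<noteq> y'"
proof (cases "(x, y) = (x', y')")
  case True
  then show ?thesis
    using matching_covers[OF assms(1)] less_irrefl unfolding covers_def by auto
next
  case False
  then show ?thesis using matching_disjoint[OF assms False] by auto
qed

lemma bottom_unique: "(x, y) \<in> M \<Longrightarrow> (x', y) \<in> M \<Longrightarrow> x = x'"
  using matching_disjoint by fastforce

lemma tops_subset: "snd ` M \<subseteq> P"
  using matching_covers unfolding covers_def by auto

lemma finite_if_subset_tops: "Y \<subseteq> snd ` M \<Longrightarrow> finite Y"
  using finite_subset[OF order_trans finite_P] tops_subset by blast

lemma inj_on_snd: "inj_on snd M"
proof (rule inj_onI)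
  fix e e' assume "e \<in> M" "e' \<in> M" "snd e = snd e'"
  then show "e = e'" using bottom_unique[of "fst e" "snd e" "fst e'"] by (cases e, cases e') auto
qed

definition mate :: "'a \<Rightarrow> 'a" where
  "mate y = (THE x. (x, y) \<in> M)"

lemma mate_in_matching:
  assumes "y \<in> snd ` M"
  shows "(mate y, y) \<in> M"
proof -
  obtain x where x: "(x, y) \<in> M" using assms by force
  then have "mate y = x"
    unfolding mate_def by (rule the_equality) (use x bottom_unique in simp)
  with x show ?thesis by simp
qed

lemma mate_covers: "y \<in> snd ` M \<Longrightarrow> covers P lt (mate y) y"
  using mate_in_matching matching_covers by blast

lemma inj_on_mate: "inj_on mate (snd ` M)"
proof (rule inj_onI)
  fix y y' assume y: "y \<in> snd ` M" "y' \<in> snd ` M" and eq: "mate y = mate y'"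
  show "y = y'"
  proof (rule ccontr)
    assume "y \<noteq> y'"
    then show False
      using matching_disjoint[OF mate_in_matching[OF y(1)] mate_in_matching[OF y(2)]] eq by auto
  qed
qed

definition mate_cycle :: "'a list \<Rightarrow> 'a list" where
  "mate_cycle zs =
     map (\<lambda>i. if even i then mate (zs ! (i div 2)) else zs ! (i div 2)) [0..<2 * length zs]"

lemma distinct_mate_cycle:
  assumes "distinct zs" "set zs \<subseteq> snd ` M"
  shows "distinct (mate_cycle zs)"
proof -
  have tops: "zs ! k \<in> snd ` M" if "k < length zs" for k
    using assms(2) that by auto
  have "inj_on (\<lambda>i. if even i then mate (zs ! (i div 2)) else zs ! (i div 2)) {0..<2 * length zs}"
  proof (rule inj_onI)
    fix i j
    assume ij: "i \<in> {0..<2 * length zs}" "j \<in> {0..<2 * length zs}"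
      and eq: "(if even i then mate (zs ! (i div 2)) else zs ! (i div 2)) =
               (if even j then mate (zs ! (j div 2)) else zs ! (j div 2))"
    have idx: "i div 2 < length zs" "j div 2 < length zs" using ij by auto
    have parity: "even i \<longleftrightarrow> even j"
    proof (rule ccontr)
      assume "even i \<noteq> even j"
      then have "mate (zs ! (i div 2)) = zs ! (j div 2) \<or> mate (zs ! (j div 2)) = zs ! (i div 2)"
        using eq by (auto split: if_splits)
      then show False
        using bottom_ne_top[OF mate_in_matching[OF tops[OF idx(1)]] mate_in_matching[OF tops[OF idx(2)]]]
          bottom_ne_top[OF mate_in_matching[OF tops[OF idx(2)]] mate_in_matching[OF tops[OF idx(1)]]]
        by blast
    qed
    have "zs ! (i div 2) = zs ! (j div 2)"
    proof (cases "even i")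
      case True
      then have "mate (zs ! (i div 2)) = mate (zs ! (j div 2))" using eq parity by simp
      then show ?thesis using inj_onD[OF inj_on_mate _ tops[OF idx(1)] tops[OF idx(2)]] by blast
    next
      case False
      then show ?thesis using eq parity by simp
    qed
    then have "i div 2 = j div 2" using assms(1) idx by (simp add: nth_eq_iff_index_eq)
    with parity show "i = j" by presburger
  qed
  then show ?thesis unfolding mate_cycle_def by (simp add: distinct_map)
qed

lemma nth_mate_cycle:
  "i < 2 * length zs \<Longrightarrow>
   mate_cycle zs ! i = (if even i then mate (zs ! (i div 2)) else zs ! (i div 2))"
  unfolding mate_cycle_def by simp

context
  fixes zs :: "'a list"
  assumes zs_distinct: "distinct zs" and zs_length: "2 \<le> length zs"
    and zs_tops: "set zs \<subseteq> snd ` M"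
    and zs_chain: "\<forall>i<length zs. covers P lt (mate (zs ! (Suc i mod length zs))) (zs ! i)"
begin

lemma mate_cycle_edge:
  assumes i: "i < 2 * length zs"
  shows "hasse_edge P lt (mate_cycle zs ! i) (mate_cycle zs ! ((i + 1) mod (2 * length zs))) \<and>
         (in_matching M (mate_cycle zs ! i) (mate_cycle zs ! ((i + 1) mod (2 * length zs)))
            \<longleftrightarrow> even i)"
proof -
  define L where "L = length zs"
  define t where "t = i div 2"
  have t: "t < L" using i unfolding t_def L_def by simp
  have top: "\<And>k. k < L \<Longrightarrow> zs ! k \<in> snd ` M" using zs_tops unfolding L_def by auto
  show ?thesis
  proof (cases "even i")
    case True
    then have "i + 1 < 2 * L" using i unfolding L_def by presburger
    then have "mate_cycle zs ! i = mate (zs ! t)" "mate_cycle zs ! ((i + 1) mod (2 * L)) = zs ! t"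
      using True i nth_mate_cycle unfolding t_def L_def by auto
    then show ?thesis
      using mate_in_matching[OF top[OF t]] mate_covers[OF top[OF t]] True
      unfolding L_def hasse_edge_def in_matching_def by auto
  next
    case False
    define t' where "t' = Suc t mod L"
    have t': "t' < L" "t' \<noteq> t"
      using t zs_length unfolding t'_def L_def by (auto simp: mod_Suc)
    have "(i + 1) mod (2 * L) = 2 * t'"
      using False unfolding t'_def t_def by (simp add: mult_mod_right)
    then have v: "mate_cycle zs ! i = zs ! t" "mate_cycle zs ! ((i + 1) mod (2 * L)) = mate (zs ! t')"
      using False i t' nth_mate_cycle unfolding t_def L_def by auto
    have "(zs ! t, mate (zs ! t')) \<notin> M"
      using bottom_ne_top mate_in_matching[OF top[OF t]] by blast
    moreover have "(mate (zs ! t'), zs ! t) \<notin> M"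
    proof
      assume "(mate (zs ! t'), zs ! t) \<in> M"
      then have "mate (zs ! t') = mate (zs ! t)"
        using bottom_unique mate_in_matching[OF top[OF t]] by blast
      then have "zs ! t' = zs ! t" using inj_onD[OF inj_on_mate _ top[OF t'(1)] top[OF t]] by blast
      then show False using t t' zs_distinct unfolding L_def by (simp add: nth_eq_iff_index_eq)
    qed
    moreover have "covers P lt (mate (zs ! t')) (zs ! t)"
      using zs_chain t unfolding t'_def L_def by blast
    ultimately show ?thesis using v False unfolding L_def hasse_edge_def in_matching_def by auto
  qed
qed

lemma flat_alt_cycle_mate_cycle:
  assumes same_rank: "\<forall>z\<in>set zs. \<rho> z = r"
  shows "flat_alt_cycle P lt \<rho> M (mate_cycle zs)"
proof -
  have mate_rank: "\<rho> (mate z) + 1 = r" if "z \<in> set zs" for z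
    using rank_covers[OF mate_covers] same_rank zs_tops that by fastforce
  have flat: "\<rho> (mate_cycle zs ! i) = r - 1 \<or> \<rho> (mate_cycle zs ! i) = r - 1 + 1"
    if "i < 2 * length zs" for i
  proof -
    have "zs ! (i div 2) \<in> set zs" using that by simp
    then show ?thesis using nth_mate_cycle[OF that] mate_rank same_rank by fastforce
  qed
  have "set (mate_cycle zs) \<subseteq> set zs \<union> mate ` set zs"
    unfolding mate_cycle_def by (auto intro!: nth_mem)
  then have "set (mate_cycle zs) \<subseteq> P"
    using zs_tops tops_subset mate_covers unfolding covers_def by blast
  moreover have "length (mate_cycle zs) = 2 * length zs" by (simp add: mate_cycle_def)
  ultimately show ?thesis
    unfolding flat_alt_cycle_def Let_def
    using zs_length distinct_mate_cycle[OF zs_distinct zs_tops] mate_cycle_edge flat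
    by (intro conjI exI[of _ "r - 1"] allI impI) auto
qed

end

lemma no_mate_covering_layer:
  assumes Z: "Z \<subseteq> snd ` M" "Z \<noteq> {}" "\<forall>z\<in>Z. \<rho> z = r"
    and covered: "\<forall>p\<in>Z. \<exists>p'\<in>Z. p' \<noteq> p \<and> covers P lt (mate p') p"
  shows False
proof -
  have "\<forall>p\<in>Z. \<exists>p'. p' \<in> Z \<and> p' \<noteq> p \<and> covers P lt (mate p') p"
    using covered by blast
  then obtain f where f: "\<forall>p\<in>Z. f p \<in> Z \<and> f p \<noteq> p \<and> covers P lt (mate (f p)) p"
    by (rule bchoice[THEN exE])
  have "finite Z" using Z(1) by (rule finite_if_subset_tops)
  moreover have "f ` Z \<subseteq> Z" using f by blast
  ultimately obtain zs where zs: "zs \<noteq> []" "distinct zs" "set zs \<subseteq> Z"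
    and next_zs: "\<forall>i<length zs. f (zs ! i) = zs ! (Suc i mod length zs)"
    using finite_fun_cycle Z(2) by metis
  have zs_Z: "zs ! i \<in> Z" if "i < length zs" for i using zs(3) that by auto
  have "length zs \<noteq> 1"
  proof
    assume "length zs = 1"
    then have "f (zs ! 0) = zs ! 0" using next_zs by simp
    moreover have "zs ! 0 \<in> Z" using zs_Z \<open>length zs = 1\<close> by simp
    ultimately show False using f by blast
  qed
  then have length_zs: "2 \<le> length zs" using zs(1) length_greater_0_conv[of zs] by linarith
  have chain: "\<forall>i<length zs. covers P lt (mate (zs ! (Suc i mod length zs))) (zs ! i)"
  proof (intro allI impI)
    fix i assume i: "i < length zs"
    then have "covers P lt (mate (f (zs ! i))) (zs ! i)" using f zs_Z by blast
    then show "covers P lt (mate (zs ! (Suc i mod length zs))) (zs ! i)" using next_zs i by simp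
  qed
  have "set zs \<subseteq> snd ` M" "\<forall>z\<in>set zs. \<rho> z = r" using zs(3) Z by auto
  then have "flat_alt_cycle P lt \<rho> M (mate_cycle zs)"
    using flat_alt_cycle_mate_cycle[OF zs(2) length_zs _ chain] by blast
  then show False using facf unfolding facf_matching_def by blast
qed

lemma exists_unblocked_top:
  assumes Y: "Y \<subseteq> snd ` M" "Y \<noteq> {}"
  obtains p where "p \<in> Y" "\<forall>p'\<in>Y. p' \<noteq> p \<longrightarrow> \<not> lt (mate p') p"
proof -
  have "finite Y" using Y(1) by (rule finite_if_subset_tops)
  define r where "r = Min (\<rho> ` Y)"
  define Z where "Z = {p \<in> Y. \<rho> p = r}"
  have "Z \<noteq> {}" unfolding Z_def r_def using Min_in[of "\<rho> ` Y"] \<open>finite Y\<close> Y(2) by fastforce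
  have r_min: "r \<le> \<rho> p" if "p \<in> Y" for p unfolding r_def using \<open>finite Y\<close> that by simp
  show thesis
  proof (rule ccontr)
    assume "\<not> thesis"
    then have blocked: "\<forall>p\<in>Y. \<exists>p'\<in>Y. p' \<noteq> p \<and> lt (mate p') p" using that by blast
    have "\<exists>p'\<in>Z. p' \<noteq> p \<and> covers P lt (mate p') p" if p: "p \<in> Z" for p
    proof -
      obtain p' where p': "p' \<in> Y" "p' \<noteq> p" "lt (mate p') p"
        using blocked p unfolding Z_def by blast
      have c: "covers P lt (mate p') p'" using mate_covers p'(1) Y(1) by blast
      have "mate p' \<in> P" "p \<in> P" using c p Y(1) tops_subset unfolding covers_def Z_def by auto
      then have "\<rho> (mate p') < \<rho> p" using rank_less p'(3) by blast
      moreover have "\<rho> p' = \<rho> (mate p') + 1" using rank_covers[OF c] .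
      moreover have "\<rho> p = r" "r \<le> \<rho> p'" using p r_min p'(1) unfolding Z_def by auto
      ultimately have "\<rho> p' = r" "\<rho> p = \<rho> (mate p') + 1" by auto
      moreover have "covers P lt (mate p') p"
        using covers_if_rank_Suc[OF \<open>mate p' \<in> P\<close> \<open>p \<in> P\<close> p'(3)] calculation(2) .
      ultimately show ?thesis using p'(1,2) unfolding Z_def by blast
    qed
    moreover have "Z \<subseteq> snd ` M" "\<forall>z\<in>Z. \<rho> z = r" using Y(1) unfolding Z_def by auto
    ultimately show False using no_mate_covering_layer \<open>Z \<noteq> {}\<close> by blast
  qed
qed

lemma legal_seq_of_tops:
  assumes "Y \<subseteq> snd ` M" "Y \<union> mate ` Y \<subseteq> S"
  shows "\<exists>ps. legal_seq lt S ps \<and> distinct ps \<and> set ps = Y"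
  using assms
proof (induction "card Y" arbitrary: Y S rule: less_induct)
  case less
  show ?case
  proof (cases "Y = {}")
    case True
    then show ?thesis by simp
  next
    case False
    obtain p where p: "p \<in> Y" "\<forall>p'\<in>Y. p' \<noteq> p \<longrightarrow> \<not> lt (mate p') p"
      using exists_unblocked_top less.prems(1) False by blast
    have tops: "\<And>y. y \<in> Y \<Longrightarrow> y \<in> snd ` M" using less.prems(1) by blast
    have survive: "p' \<in> do_move lt S p \<and> mate p' \<in> do_move lt S p" if p': "p' \<in> Y - {p}" for p'
    proof -
      have c: "covers P lt (mate p') p'" using mate_covers tops p' by blast
      have "mate p' \<noteq> p"
        using bottom_ne_top[OF mate_in_matching mate_in_matching, OF tops tops] p' p(1) by blast
      moreover have "\<not> lt p' p"
      proof
        assume "lt p' p"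
        moreover have "p \<in> P" using tops_subset tops[OF p(1)] by blast
        ultimately have "lt (mate p') p" using c less_trans[of "mate p'" p' p] unfolding covers_def by blast
        then show False using p p' by blast
      qed
      ultimately show ?thesis
        using p p' less.prems(2) unfolding do_move_def by auto
    qed
    have "finite Y" using less.prems(1) by (rule finite_if_subset_tops)
    then have "card (Y - {p}) < card Y" using p(1) by (rule card_Diff1_less)
    moreover have "Y - {p} \<subseteq> snd ` M" using less.prems(1) by blast
    moreover have "(Y - {p}) \<union> mate ` (Y - {p}) \<subseteq> do_move lt S p" using survive by blast
    ultimately obtain ps where ps: "legal_seq lt (do_move lt S p) ps" "distinct ps" "set ps = Y - {p}"
      using less.hyps by blast
    have "legal_pick lt S p"
      using mate_covers tops p(1) less.prems(2) unfolding legal_pick_def covers_def by blast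
    with ps p(1) show ?thesis by (intro exI[of _ "p # ps"]) auto
  qed
qed

lemma matching_to_game:
  "\<exists>ps. legal_move_seq P lt ps \<and> distinct ps \<and> set ps = snd ` M \<and>
        score w ps = matching_weight w M"
proof -
  have "mate y \<in> P" if "y \<in> snd ` M" for y
    using mate_covers[OF that] unfolding covers_def by blast
  then have "snd ` M \<union> mate ` snd ` M \<subseteq> P" using tops_subset by blast
  then have "\<exists>ps. legal_seq lt P ps \<and> distinct ps \<and> set ps = snd ` M"
    by (rule legal_seq_of_tops[OF order_refl])
  then obtain ps where ps: "legal_seq lt P ps" "distinct ps" "set ps = snd ` M" by blast
  have "score w ps = sum w (snd ` M)"
    unfolding score_def using sum.distinct_set_conv_list[OF ps(2), of w] ps(3) by simp
  also have "\<dots> = (\<Sum>(x, y)\<in>M. w y)"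
    by (rule sum.reindex_cong[of snd]) (auto simp: inj_on_snd)
  finally show ?thesis using ps unfolding legal_move_seq_def matching_weight_def by blast
qed

end

lemma (in graded_poset) facf_matching_to_game:
  assumes "finite P" "facf_matching P lt \<rho> M"
  shows "\<exists>ps. legal_move_seq P lt ps \<and> distinct ps \<and> set ps = snd ` M \<and>
               score w ps = matching_weight w M"
proof -
  interpret graded_poset_matching P lt \<rho> M by unfold_locales (use assms in simp_all)
  show ?thesis by (rule matching_to_game)
qed

lemma (in graded_poset) scores_eq_matching_weights:
  assumes "finite P"
  shows "{score w ps | ps. legal_move_seq P lt ps} = {matching_weight w M | M. facf_matching P lt \<rho> M}"
proof (intro equalityI subsetI)
  fix s assume "s \<in> {score w ps | ps. legal_move_seq P lt ps}"
  then obtain ps where ps: "legal_move_seq P lt ps" "s = score w ps" by blast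
  obtain qs where "length qs = length ps"
    and "\<forall>i<length ps. qs ! i \<in> taxed P lt ps i \<and> (\<forall>a\<in>taxed P lt ps i. \<not> lt (qs ! i) a)"
    using taxed_maximal_choice[OF assms ps(1)] by blast
  from game_to_matching[OF ps(1) this, of w] ps(2)
  show "s \<in> {matching_weight w M | M. facf_matching P lt \<rho> M}" by force
next
  fix s assume "s \<in> {matching_weight w M | M. facf_matching P lt \<rho> M}"
  then obtain M where "facf_matching P lt \<rho> M" "s = matching_weight w M" by blast
  with facf_matching_to_game[OF assms, of M w]
  show "s \<in> {score w ps | ps. legal_move_seq P lt ps}" by force
qed

theorem theorem1:
  fixes P :: "'a set" and lt :: "'a \<Rightarrow> 'a \<Rightarrow> bool"
    and \<rho> :: "'a \<Rightarrow> nat" and w :: "'a \<Rightarrow> real"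
  assumes "finite P"
    and "strict_po P lt"
    and "graded P lt \<rho>"
  shows "Max {score w ps | ps. legal_move_seq P lt ps}
           = Max {matching_weight w M | M. facf_matching P lt \<rho> M}
         \<and> (\<forall>ps qs. legal_move_seq P lt ps \<longrightarrow> length qs = length ps \<longrightarrow>
             (\<forall>i<length ps. qs ! i \<in> taxed P lt ps i \<and>
                (\<forall>a\<in>taxed P lt ps i. \<not> lt (qs ! i) a)) \<longrightarrow>
             (\<forall>i<length ps. covers P lt (qs ! i) (ps ! i)) \<and>
             facf_matching P lt \<rho> (set (zip qs ps)) \<and>
             matching_weight w (set (zip qs ps)) = score w ps)
         \<and> (\<forall>M. facf_matching P lt \<rho> M \<longrightarrow>
             (\<exists>ps. legal_move_seq P lt ps \<and> distinct ps \<and> set ps = snd ` M \<and>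
                score w ps = matching_weight w M))"
proof -
  interpret graded_poset P lt \<rho> using assms(2,3) by unfold_locales
  show ?thesis
    using scores_eq_matching_weights[OF assms(1), of w] game_to_matching
      facf_matching_to_game[OF assms(1)]
    by simp
qed

end
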